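(* Let $R$ be a reduced ring and $n\ge 1$. Then the ring $$S=\left\{\begin{pmatrix} a & a_{12} & \cdots & a_{1n}\\ 0 & a & \cdots & a_{2n}\\ \vdots & \vdots & \ddots & \vdots\\ 0&0&\cdots & a\end{pmatrix} : a, a_{ij}\in R\right\}$$ of upper triangular $n\times n$ matrices over $R$ with constant diagonal is almost Armendariz.
   Context: All rings are associative with identity. A ring is reduced if it has no nonzero nilpotent elements. For a ring $R$, $P(R)$ denotes the prime radical of $R$ (the intersection of all prime ideals of $R$, equivalently the set of strongly nilpotent elements of $R$). A ring $R$ is called almost Armendariz if whenever $f(x)=\sum_{i=0}^m a_ix^i$ and $g(x)=\sum_{j=0}^n b_jx^j\in R[x]$ satisfy $f(x)g(x)=0$, then $a_ib_j\in P(R)$ for all $0\le i\le m$, $0\le j\le n$. *)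

theory Defs
  imports "HOL-Algebra.Algebra"
begin

definition reduced_ring :: "('a, 'b) ring_scheme \<Rightarrow> bool" where
  "reduced_ring R \<longleftrightarrow>
     (\<forall>x \<in> carrier R. \<forall>k::nat. x [^]\<^bsub>R\<^esub> k = \<zero>\<^bsub>R\<^esub> \<longrightarrow> x = \<zero>\<^bsub>R\<^esub>)"

definition nc_prime_ideal :: "'a set \<Rightarrow> ('a, 'b) ring_scheme \<Rightarrow> bool" where
  "nc_prime_ideal P R \<longleftrightarrow> ideal P R \<and> P \<noteq> carrier R \<and>
     (\<forall>A B. ideal A R \<longrightarrow> ideal B R \<longrightarrow>
        (\<forall>a \<in> A. \<forall>b \<in> B. a \<otimes>\<^bsub>R\<^esub> b \<in> P) \<longrightarrow> A \<subseteq> P \<or> B \<subseteq> P)"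

definition prime_radical :: "('a, 'b) ring_scheme \<Rightarrow> 'a set" where
  "prime_radical R = {x \<in> carrier R. \<forall>P. nc_prime_ideal P R \<longrightarrow> x \<in> P}"

definition almost_armendariz :: "('a, 'b) ring_scheme \<Rightarrow> bool" where
  "almost_armendariz R \<longleftrightarrow>
     (\<forall>f \<in> carrier (UP R). \<forall>g \<in> carrier (UP R).
        f \<otimes>\<^bsub>UP R\<^esub> g = \<zero>\<^bsub>UP R\<^esub> \<longrightarrow>
        (\<forall>i j. coeff (UP R) f i \<otimes>\<^bsub>R\<^esub> coeff (UP R) g j \<in> prime_radical R))"

definition const_diag_tri_ring :: "('a, 'b) ring_scheme \<Rightarrow> nat \<Rightarrow> (nat \<Rightarrow> nat \<Rightarrow> 'a) ring" where
  "const_diag_tri_ring R n = \<lparr>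
     carrier = {A. (\<forall>i j. (n \<le> i \<or> n \<le> j) \<longrightarrow> A i j = \<zero>\<^bsub>R\<^esub>)
                 \<and> (\<forall>i<n. \<forall>j<n. A i j \<in> carrier R)
                 \<and> (\<forall>i<n. \<forall>j<i. A i j = \<zero>\<^bsub>R\<^esub>)
                 \<and> (\<forall>i<n. A i i = A 0 0)},
     monoid.mult = (\<lambda>A B i j. if i < n \<and> j < n
                        then (\<Oplus>\<^bsub>R\<^esub> k \<in> {..<n}. A i k \<otimes>\<^bsub>R\<^esub> B k j)
                        else \<zero>\<^bsub>R\<^esub>),
     monoid.one = (\<lambda>i j. if i < n \<and> i = j then \<one>\<^bsub>R\<^esub> else \<zero>\<^bsub>R\<^esub>),
     ring.zero = (\<lambda>i j. \<zero>\<^bsub>R\<^esub>),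
     ring.add = (\<lambda>A B i j. if i < n \<and> j < n then A i j \<oplus>\<^bsub>R\<^esub> B i j else \<zero>\<^bsub>R\<^esub>) \<rparr>"

end

theory Submission
  imports Defs
begin

text \<open>Taking the common diagonal entry is a ring homomorphism from the matrix ring \<open>S\<close> onto the
  reduced ring \<open>R\<close>, and reduced rings are Armendariz: if \<open>f g = 0\<close> in \<open>S[x]\<close>, every product
  \<open>a\<^sub>i b\<^sub>j\<close> of coefficients has zero diagonal. The matrices of \<open>S\<close> with zero diagonal form the
  ideal \<open>N\<^sub>1\<close> of the filtration \<open>N\<^sub>k\<close> (entries vanish below the \<open>k\<close>-th superdiagonal), with
  \<open>N\<^sub>k N\<^sub>l \<subseteq> N\<^sub>k\<^sub>+\<^sub>l\<close> and \<open>N\<^sub>n = 0\<close>. Hence \<open>N\<^sub>1\<close> is nilpotent and therefore contained in every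
  prime ideal.\<close>

lemma (in abelian_monoid) finsum_eq_single:
  assumes "finite A" "m \<in> A" "f \<in> A \<rightarrow> carrier G" "\<And>i. i \<in> A \<Longrightarrow> i \<noteq> m \<Longrightarrow> f i = \<zero>"
  shows "finsum G f A = f m"
proof -
  have "finsum G f A = finsum G f {m}"
    by (rule add.finprod_mono_neutral_cong_right) (use assms in auto)
  also have "\<dots> = f m"
    using assms by (simp add: Pi_iff)
  finally show ?thesis .
qed


context
  fixes R (structure)
  assumes R: "ring R" and reduced: "reduced_ring R"
begin

interpretation ring R by (fact R)

lemma reduced_square_eq_zero:
  assumes "x \<in> carrier R" "x \<otimes> x = \<zero>"
  shows "x = \<zero>"
proof -
  have "x [^] (2::nat) = \<zero>"
    using assms by (simp add: numeral_2_eq_2)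
  then show ?thesis
    using reduced assms(1) unfolding reduced_ring_def by blast
qed

lemma reduced_mult_zero_commute:
  assumes x: "x \<in> carrier R" and y: "y \<in> carrier R" and "x \<otimes> y = \<zero>"
  shows "y \<otimes> x = \<zero>"
proof -
  have "(y \<otimes> x) \<otimes> (y \<otimes> x) = y \<otimes> (x \<otimes> y) \<otimes> x"
    using x y by (simp add: m_assoc)
  also have "\<dots> = \<zero>"
    using assms by simp
  finally show ?thesis
    using reduced_square_eq_zero[of "y \<otimes> x"] x y by simp
qed

lemma reduced_mult_zero_insert:
  assumes x: "x \<in> carrier R" and y: "y \<in> carrier R" and r: "r \<in> carrier R"
    and "x \<otimes> y = \<zero>"
  shows "x \<otimes> r \<otimes> y = \<zero>"
proof -
  have "y \<otimes> x = \<zero>"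
    using reduced_mult_zero_commute assms by blast
  moreover have "(x \<otimes> r \<otimes> y) \<otimes> (x \<otimes> r \<otimes> y) = x \<otimes> r \<otimes> (y \<otimes> x) \<otimes> r \<otimes> y"
    using x y r by (simp add: m_assoc)
  ultimately have "(x \<otimes> r \<otimes> y) \<otimes> (x \<otimes> r \<otimes> y) = \<zero>"
    using x r y by simp
  then show ?thesis
    using reduced_square_eq_zero[of "x \<otimes> r \<otimes> y"] x y r by simp
qed

lemma reduced_mult_right_square_cancel:
  assumes x: "x \<in> carrier R" and y: "y \<in> carrier R" and "x \<otimes> y \<otimes> y = \<zero>"
  shows "x \<otimes> y = \<zero>"
proof -
  have "y \<otimes> (x \<otimes> y) = \<zero>"
    using reduced_mult_zero_commute[of "x \<otimes> y" y] assms by simp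
  then have "(x \<otimes> y) \<otimes> (x \<otimes> y) = \<zero>"
    using x y by (simp add: m_assoc)
  then show ?thesis
    using reduced_square_eq_zero[of "x \<otimes> y"] x y by simp
qed

text \<open>One step of the double induction below: multiplying the \<open>k\<close>-th convolution on the right
  by \<open>b t\<close> kills every term except \<open>a (k - t) \<otimes> b t \<otimes> b t\<close>.\<close>

lemma reduced_convolution_step:
  fixes a b :: "nat \<Rightarrow> 'a"
  assumes a: "\<And>i. a i \<in> carrier R" and b: "\<And>i. b i \<in> carrier R"
    and conv: "(\<Oplus>i\<in>{..k}. a i \<otimes> b (k - i)) = \<zero>" and "t \<le> k"
    and lower: "\<And>i j. i + j < k \<Longrightarrow> a i \<otimes> b j = \<zero>"
    and earlier: "\<And>s. s < t \<Longrightarrow> a (k - s) \<otimes> b s = \<zero>"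
  shows "a (k - t) \<otimes> b t = \<zero>"
proof -
  have "\<zero> = (\<Oplus>i\<in>{..k}. a i \<otimes> b (k - i)) \<otimes> b t"
    using conv b by simp
  also have "\<dots> = (\<Oplus>i\<in>{..k}. a i \<otimes> b (k - i) \<otimes> b t)"
    using finsum_ldistr[of "{..k}" "b t" "\<lambda>i. a i \<otimes> b (k - i)"] a b by simp
  also have "\<dots> = a (k - t) \<otimes> b (k - (k - t)) \<otimes> b t"
  proof (rule finsum_eq_single)
    fix i assume i: "i \<in> {..k}" "i \<noteq> k - t"
    show "a i \<otimes> b (k - i) \<otimes> b t = \<zero>"
    proof (cases "k - i < t")
      case True
      then have "a i \<otimes> b (k - i) = \<zero>"
        using earlier[of "k - i"] i by simp
      then show ?thesis
        using a b by simp
    next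
      case False
      then have "a i \<otimes> b t = \<zero>"
        using lower i \<open>t \<le> k\<close> by simp
      then show ?thesis
        using reduced_mult_zero_insert a b by simp
    qed
  qed (use a b \<open>t \<le> k\<close> in auto)
  finally show ?thesis
    using reduced_mult_right_square_cancel a b \<open>t \<le> k\<close> by simp
qed

lemma reduced_convolution_eq_zero_imp_mult_eq_zero:
  fixes a b :: "nat \<Rightarrow> 'a"
  assumes a: "\<And>i. a i \<in> carrier R" and b: "\<And>i. b i \<in> carrier R"
    and conv: "\<And>k. (\<Oplus>i\<in>{..k}. a i \<otimes> b (k - i)) = \<zero>"
  shows "a i \<otimes> b j = \<zero>"
proof -
  have "\<forall>i j. i + j = k \<longrightarrow> a i \<otimes> b j = \<zero>" for k
  proof (induction k rule: less_induct)
    case (less k)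
    then have lower: "a i \<otimes> b j = \<zero>" if "i + j < k" for i j
      using that by blast
    have "t \<le> k \<Longrightarrow> a (k - t) \<otimes> b t = \<zero>" for t
    proof (induction t rule: less_induct)
      case (less t)
      show ?case
        by (rule reduced_convolution_step[OF a b conv less.prems lower])
          (use less in auto)
    qed
    then show ?case
      by (metis add_diff_cancel_right' le_add2)
  qed
  then show ?thesis
    by blast
qed

end


definition upper_band :: "('a, 'b) ring_scheme \<Rightarrow> nat \<Rightarrow> nat \<Rightarrow> (nat \<Rightarrow> nat \<Rightarrow> 'a) set" where
  "upper_band R n k =
     {A \<in> carrier (const_diag_tri_ring R n). \<forall>i j. j < i + k \<longrightarrow> A i j = \<zero>\<^bsub>R\<^esub>}"

locale const_diag_tri = R: ring R for R :: "('a, 'b) ring_scheme" and n :: nat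
begin

abbreviation S where "S \<equiv> const_diag_tri_ring R n"

lemma tri_mult_apply:
  "(A \<otimes>\<^bsub>S\<^esub> B) i j =
     (if i < n \<and> j < n then \<Oplus>\<^bsub>R\<^esub> k \<in> {..<n}. A i k \<otimes>\<^bsub>R\<^esub> B k j else \<zero>\<^bsub>R\<^esub>)"
  by (simp add: const_diag_tri_ring_def)

lemma tri_add_apply:
  "(A \<oplus>\<^bsub>S\<^esub> B) i j = (if i < n \<and> j < n then A i j \<oplus>\<^bsub>R\<^esub> B i j else \<zero>\<^bsub>R\<^esub>)"
  by (simp add: const_diag_tri_ring_def)

lemma tri_zero_apply: "\<zero>\<^bsub>S\<^esub> i j = \<zero>\<^bsub>R\<^esub>"
  by (simp add: const_diag_tri_ring_def)

lemma tri_carrier_iff: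
  "A \<in> carrier S \<longleftrightarrow>
     (\<forall>i j. n \<le> i \<or> n \<le> j \<longrightarrow> A i j = \<zero>\<^bsub>R\<^esub>) \<and> (\<forall>i<n. \<forall>j<n. A i j \<in> carrier R) \<and>
     (\<forall>i<n. \<forall>j<i. A i j = \<zero>\<^bsub>R\<^esub>) \<and> (\<forall>i<n. A i i = A 0 0)"
  by (simp add: const_diag_tri_ring_def)

lemma tri_entry_closed: "A \<in> carrier S \<Longrightarrow> i < n \<Longrightarrow> j < n \<Longrightarrow> A i j \<in> carrier R"
  by (simp add: const_diag_tri_ring_def)

lemma tri_entry_outside: "A \<in> carrier S \<Longrightarrow> n \<le> i \<or> n \<le> j \<Longrightarrow> A i j = \<zero>\<^bsub>R\<^esub>"
  by (auto simp: const_diag_tri_ring_def)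

lemma tri_entry_below_diag: "A \<in> carrier S \<Longrightarrow> j < i \<Longrightarrow> A i j = \<zero>\<^bsub>R\<^esub>"
  by (cases "i < n") (simp_all add: const_diag_tri_ring_def)

lemma tri_diag_eq: "A \<in> carrier S \<Longrightarrow> i < n \<Longrightarrow> A i i = A 0 0"
  unfolding tri_carrier_iff by blast

lemma tri_mult_entry_eq_zero:
  assumes A: "A \<in> carrier S" and B: "B \<in> carrier S"
    and A_band: "\<And>i l. l < i + k \<Longrightarrow> A i l = \<zero>\<^bsub>R\<^esub>"
    and B_band: "\<And>l j. j < l + m \<Longrightarrow> B l j = \<zero>\<^bsub>R\<^esub>"
    and "j < i + (k + m)"
  shows "(A \<otimes>\<^bsub>S\<^esub> B) i j = \<zero>\<^bsub>R\<^esub>"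
proof (cases "i < n \<and> j < n")
  case True
  have "(\<Oplus>\<^bsub>R\<^esub> l\<in>{..<n}. A i l \<otimes>\<^bsub>R\<^esub> B l j) = \<zero>\<^bsub>R\<^esub>"
  proof (rule R.add.finprod_one_eqI)
    fix l assume "l \<in> {..<n}"
    then show "A i l \<otimes>\<^bsub>R\<^esub> B l j = \<zero>\<^bsub>R\<^esub>"
      using A_band[of l i] B_band[of j l] \<open>j < i + (k + m)\<close>
        tri_entry_closed[OF A, of i l] tri_entry_closed[OF B, of l j] True
      by (cases "l < i + k") auto
  qed
  then show ?thesis
    using True by (simp add: tri_mult_apply)
qed (auto simp: tri_mult_apply)

lemma tri_mult_diag:
  assumes A: "A \<in> carrier S" and B: "B \<in> carrier S" and "i < n"
  shows "(A \<otimes>\<^bsub>S\<^esub> B) i i = A i i \<otimes>\<^bsub>R\<^esub> B i i"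
proof -
  have "(\<Oplus>\<^bsub>R\<^esub> l\<in>{..<n}. A i l \<otimes>\<^bsub>R\<^esub> B l i) = A i i \<otimes>\<^bsub>R\<^esub> B i i"
  proof (rule R.finsum_eq_single)
    fix l assume "l \<in> {..<n}" "l \<noteq> i"
    then show "A i l \<otimes>\<^bsub>R\<^esub> B l i = \<zero>\<^bsub>R\<^esub>"
      using tri_entry_below_diag[OF A, of l i] tri_entry_below_diag[OF B, of i l]
        tri_entry_closed[OF A, of i l] tri_entry_closed[OF B, of l i] \<open>i < n\<close>
      by (cases "l < i") auto
  qed (use tri_entry_closed[OF A] tri_entry_closed[OF B] \<open>i < n\<close> in auto)
  then show ?thesis
    using \<open>i < n\<close> by (simp add: tri_mult_apply)
qed

lemma tri_mult_closed:
  assumes A: "A \<in> carrier S" and B: "B \<in> carrier S"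
  shows "A \<otimes>\<^bsub>S\<^esub> B \<in> carrier S"
proof -
  have "(A \<otimes>\<^bsub>S\<^esub> B) i j = \<zero>\<^bsub>R\<^esub>" if "n \<le> i \<or> n \<le> j" for i j
    using that by (auto simp: tri_mult_apply)
  moreover have "(A \<otimes>\<^bsub>S\<^esub> B) i j \<in> carrier R" if "i < n" "j < n" for i j
    using that tri_entry_closed[OF A] tri_entry_closed[OF B]
    by (auto simp: tri_mult_apply intro!: R.finsum_closed)
  moreover have "(A \<otimes>\<^bsub>S\<^esub> B) i j = \<zero>\<^bsub>R\<^esub>" if "j < i" for i j
    by (rule tri_mult_entry_eq_zero[OF A B, where k = 0 and m = 0])
      (use that tri_entry_below_diag[OF A] tri_entry_below_diag[OF B] in auto)
  moreover have "(A \<otimes>\<^bsub>S\<^esub> B) i i = (A \<otimes>\<^bsub>S\<^esub> B) 0 0" if "i < n" for i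
    using tri_mult_diag[OF A B that] tri_mult_diag[OF A B, of 0] tri_diag_eq[OF A that]
      tri_diag_eq[OF B that] that by simp
  ultimately show ?thesis
    unfolding tri_carrier_iff by blast
qed

lemma tri_finsum_apply:
  assumes "ring S" and "finite I" and "Y \<in> I \<rightarrow> carrier S" and "i < n" "j < n"
  shows "finsum S Y I i j = (\<Oplus>\<^bsub>R\<^esub> k\<in>I. Y k i j)"
proof -
  interpret S: ring S by (fact \<open>ring S\<close>)
  show ?thesis
    using assms(2,3)
  proof (induction I rule: finite_induct)
    case empty
    then show ?case
      by (simp add: tri_zero_apply)
  next
    case (insert x F)
    have "(\<lambda>k. Y k i j) \<in> insert x F \<rightarrow> carrier R"
      using insert.prems tri_entry_closed \<open>i < n\<close> \<open>j < n\<close> by blast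
    then show ?case
      using insert \<open>i < n\<close> \<open>j < n\<close> by (simp add: S.finsum_insert tri_add_apply)
  qed
qed

lemma upper_band_0: "upper_band R n 0 = carrier S"
  by (auto simp: upper_band_def tri_entry_below_diag)

lemma upper_band_mono: "k \<le> l \<Longrightarrow> upper_band R n l \<subseteq> upper_band R n k"
  by (auto simp: upper_band_def)

lemma upper_band_mult:
  assumes "A \<in> upper_band R n k" "B \<in> upper_band R n m"
  shows "A \<otimes>\<^bsub>S\<^esub> B \<in> upper_band R n (k + m)"
  using assms tri_mult_closed tri_mult_entry_eq_zero[of A B k m]
  by (auto simp: upper_band_def)

lemma upper_band_ideal:
  assumes "ring S"
  shows "ideal (upper_band R n k) S"
proof -
  interpret S: ring S by (fact \<open>ring S\<close>)
  have left: "C \<otimes>\<^bsub>S\<^esub> A \<in> upper_band R n k" if "A \<in> upper_band R n k" "C \<in> carrier S" for A C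
    using upper_band_mult[of C 0 A k] that by (simp add: upper_band_0)
  have right: "A \<otimes>\<^bsub>S\<^esub> C \<in> upper_band R n k" if "A \<in> upper_band R n k" "C \<in> carrier S" for A C
    using upper_band_mult[of A k C 0] that by (simp add: upper_band_0)
  have "subgroup (upper_band R n k) (add_monoid S)"
  proof (rule S.add.subgroupI)
    show "upper_band R n k \<subseteq> carrier S" "upper_band R n k \<noteq> {}"
      by (auto simp: upper_band_def tri_zero_apply intro!: exI[of _ "\<zero>\<^bsub>S\<^esub>"])
  next
    fix A assume A: "A \<in> upper_band R n k"
    then have "\<ominus>\<^bsub>S\<^esub> A = (\<ominus>\<^bsub>S\<^esub> \<one>\<^bsub>S\<^esub>) \<otimes>\<^bsub>S\<^esub> A"
      by (simp add: upper_band_def S.l_minus)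
    then show "\<ominus>\<^bsub>S\<^esub> A \<in> upper_band R n k"
      using left[OF A] by simp
  next
    fix A B assume "A \<in> upper_band R n k" "B \<in> upper_band R n k"
    then show "A \<oplus>\<^bsub>S\<^esub> B \<in> upper_band R n k"
      by (auto simp: upper_band_def tri_add_apply)
  qed
  then show ?thesis
    using left right by (intro idealI \<open>ring S\<close>)
qed

lemma upper_band_trivial:
  assumes "A \<in> upper_band R n k" "n \<le> k"
  shows "A = \<zero>\<^bsub>S\<^esub>"
proof (intro ext)
  fix i j
  show "A i j = \<zero>\<^bsub>S\<^esub> i j"
    using assms tri_entry_outside[of A i j]
    by (cases "i < n \<and> j < n") (auto simp: upper_band_def tri_zero_apply)
qed

lemma upper_band_1I:
  assumes A: "A \<in> carrier S" and "A 0 0 = \<zero>\<^bsub>R\<^esub>"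
  shows "A \<in> upper_band R n 1"
proof -
  have "A i j = \<zero>\<^bsub>R\<^esub>" if "j < i + 1" for i j
  proof (cases "j < i")
    case False
    then have "j = i"
      using that by simp
    then show ?thesis
      using assms tri_diag_eq[OF A, of i] tri_entry_outside[OF A, of i j] by (cases "i < n") auto
  qed (rule tri_entry_below_diag[OF A])
  then show ?thesis
    using A by (simp add: upper_band_def)
qed

text \<open>Downward induction on \<open>k\<close>: \<open>N\<^sub>k N\<^sub>1 \<subseteq> N\<^sub>k\<^sub>+\<^sub>1 \<subseteq> P\<close> forces \<open>N\<^sub>k \<subseteq> P\<close> since \<open>N\<^sub>k \<subseteq> N\<^sub>1\<close>;
  the induction starts at \<open>N\<^sub>n = 0\<close>.\<close>

lemma upper_band_1_subset_prime_ideal: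
  assumes P: "nc_prime_ideal P S"
  shows "upper_band R n 1 \<subseteq> P"
proof -
  have ideal: "ideal P S"
    using P by (simp add: nc_prime_ideal_def)
  then have "ring S"
    by (simp add: ideal_def)
  have top: "upper_band R n n \<subseteq> P"
    using upper_band_trivial additive_subgroup.zero_closed[OF ideal.axioms(1)[OF ideal]] by auto
  have chain: "upper_band R n (n - d) \<subseteq> P" if "d < n" for d
    using that
  proof (induction d)
    case (Suc d)
    have "A \<otimes>\<^bsub>S\<^esub> B \<in> P"
      if "A \<in> upper_band R n (n - Suc d)" "B \<in> upper_band R n 1" for A B
      using upper_band_mult[OF that] Suc by (simp add: Suc_diff_Suc subset_iff)
    then have "upper_band R n (n - Suc d) \<subseteq> P \<or> upper_band R n 1 \<subseteq> P"
      using P upper_band_ideal[OF \<open>ring S\<close>] unfolding nc_prime_ideal_def by blast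
    moreover have "upper_band R n (n - Suc d) \<subseteq> upper_band R n 1"
      using Suc.prems by (intro upper_band_mono) simp
    ultimately show ?case
      by blast
  qed (use top in simp)
  show ?thesis
    using top upper_band_mono[of 0 1] chain[of "n - 1"] by (cases "n = 0") auto
qed

lemma tri_UP_coeff_mult_diag:
  assumes "ring S" "0 < n" "f \<in> carrier (UP S)" "g \<in> carrier (UP S)"
  shows "coeff (UP S) (f \<otimes>\<^bsub>UP S\<^esub> g) k 0 0 =
    (\<Oplus>\<^bsub>R\<^esub> i\<in>{..k}. coeff (UP S) f i 0 0 \<otimes>\<^bsub>R\<^esub> coeff (UP S) g (k - i) 0 0)"
proof -
  interpret S: ring S by (fact \<open>ring S\<close>)
  interpret UP: UP_ring S "UP S" by (simp add: UP_ring_def \<open>ring S\<close>)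
  have "coeff (UP S) (f \<otimes>\<^bsub>UP S\<^esub> g) k 0 0 =
      (\<Oplus>\<^bsub>R\<^esub> i\<in>{..k}. (coeff (UP S) f i \<otimes>\<^bsub>S\<^esub> coeff (UP S) g (k - i)) 0 0)"
    using assms by (simp add: tri_finsum_apply Pi_def)
  also have "\<dots> = (\<Oplus>\<^bsub>R\<^esub> i\<in>{..k}. coeff (UP S) f i 0 0 \<otimes>\<^bsub>R\<^esub> coeff (UP S) g (k - i) 0 0)"
    using assms by (intro R.finsum_cong') (auto simp: tri_mult_diag tri_entry_closed)
  finally show ?thesis .
qed

end


text \<open>Being a ring is never proved for \<open>S\<close>: it follows from the existence of a prime ideal,
  and without one the prime radical is the whole carrier.\<close>

theorem proposition2p2:
  fixes R :: "('a, 'b) ring_scheme" and n :: nat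
  assumes "ring R" and "reduced_ring R" and "1 \<le> n"
  shows "almost_armendariz (const_diag_tri_ring R n)"
  unfolding almost_armendariz_def prime_radical_def
proof (intro ballI impI allI CollectI conjI)
  let ?S = "const_diag_tri_ring R n"
  interpret const_diag_tri R n
    by (simp add: const_diag_tri_def \<open>ring R\<close>)
  fix f g i j
  assume f: "f \<in> carrier (UP ?S)" and g: "g \<in> carrier (UP ?S)"
    and fg: "f \<otimes>\<^bsub>UP ?S\<^esub> g = \<zero>\<^bsub>UP ?S\<^esub>"
  have coeff: "coeff (UP ?S) h k \<in> carrier ?S" if "h \<in> carrier (UP ?S)" for h k
    using that by (simp add: UP_def up_def Pi_def)
  show X: "coeff (UP ?S) f i \<otimes>\<^bsub>?S\<^esub> coeff (UP ?S) g j \<in> carrier ?S"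
    using tri_mult_closed coeff f g by blast
  fix P
  assume P: "nc_prime_ideal P ?S"
  then have S: "ring ?S"
    by (simp add: nc_prime_ideal_def ideal_def)
  have "coeff (UP ?S) (f \<otimes>\<^bsub>UP ?S\<^esub> g) k 0 0 = \<zero>\<^bsub>R\<^esub>" for k
    using fg S by (simp add: UP_ring.coeff_zero UP_ring_def tri_zero_apply)
  then have conv: "(\<Oplus>\<^bsub>R\<^esub> i\<in>{..k}. coeff (UP ?S) f i 0 0 \<otimes>\<^bsub>R\<^esub> coeff (UP ?S) g (k - i) 0 0) = \<zero>\<^bsub>R\<^esub>"
    for k
    using tri_UP_coeff_mult_diag[OF S _ f g] \<open>1 \<le> n\<close> by simp
  have "coeff (UP ?S) f i 0 0 \<otimes>\<^bsub>R\<^esub> coeff (UP ?S) g j 0 0 = \<zero>\<^bsub>R\<^esub>"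
    by (rule reduced_convolution_eq_zero_imp_mult_eq_zero[OF \<open>ring R\<close> \<open>reduced_ring R\<close> _ _ conv])
      (use tri_entry_closed coeff f g \<open>1 \<le> n\<close> in auto)
  then show "coeff (UP ?S) f i \<otimes>\<^bsub>?S\<^esub> coeff (UP ?S) g j \<in> P"
    using upper_band_1I[OF X] upper_band_1_subset_prime_ideal[OF P]
      tri_mult_diag[OF coeff[OF f] coeff[OF g]] \<open>1 \<le> n\<close> by auto
qed

end
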